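(* Let $\boldsymbol\alpha$ be a fixed static allocation in the setting described in the context. Then $$\min_{j\ne i^*}\mathrm{LDR}_{j,i^*}\;\ge\;\underline{\mathrm{LDR}}:=\min_{(i,\theta_b)\in\Xi}W_i(\theta_b)G_i(\theta_b),$$ where $\mathrm{LDR}_{j,i^*}:=\min_{\mathbf M\in\mathcal A_j}\sum_{(i,\theta_b)\in I(\mathbf M)}G_i(\theta_b)$.
   Context: There are $k\ge2$ solutions and $B$ parameter values $\theta_1,\dots,\theta_B$ with probabilities $p_1,\dots,p_B>0$, $\sum_bp_b=1$. For each $i,b$, $y_i(\theta_b)$ is the mean simulation output of solution $i$ at $\theta_b$, with simulation variance $\lambda_i^2(\theta_b)>0$. Each $i^b=\arg\min_iy_i(\theta_b)$ is assumed unique, and $i^*=\arg\max_i\sum_bp_b\mathbf 1\{i=i^b\}$ is assumed unique. Favorable sets: $\Theta_i=\{\theta_b:i^b=i\}$. A static allocation is $\boldsymbol\alpha$ with $\alpha_i(\theta_b)\ge0$, $\sum_{i,b}\alpha_i(\theta_b)=1$. For $i\ne i^b$, $$G_i(\theta_b)=\frac{(y_i(\theta_b)-y_{i^b}(\theta_b))^2}{2\left(\lambda_i^2(\theta_b)/\alpha_i(\theta_b)+\lambda_{i^b}^2(\theta_b)/\alpha_{i^b}(\theta_b)\right)},$$ with $G_i(\theta_b)=0$ if $\alpha_i(\theta_b)=0$ or $\alpha_{i^b}(\theta_b)=0$. Let $\mathcal M=\{\mathbf M\in\{0,1\}^{k\times B}:\mathbf M^\top\mathbf 1_k=\mathbf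 1_B\}$ with entries $m_{i,b}$; $d_j(\mathbf M)=\sum_bp_bm_{i^*,b}-\sum_bp_bm_{j,b}$; $I(\mathbf M)=\{(i,\theta_b):m_{i,b}=1,i\ne i^b\}$; for $j\ne i^*$, $\mathcal A_j=\{\mathbf M\in\mathcal M:d_j(\mathbf M)\le0\}$. Let $d_j=\sum_bp_b\mathbf 1\{i^*=i^b\}-\sum_bp_b\mathbf 1\{j=i^b\}$. Let $\Xi=\{(i,\theta_b):i\ne i^*,i\ne i^b\}$. Balance weights: $W_i(\theta_b)=\infty$ for $(i,\theta_b)\notin\Xi$, and for $(i,\theta_b)\in\Xi$, $$W_i(\theta_b)=\begin{cases}\max\left\{\min\left(\min_{j\ne i^*}d_j,\ d_i/2\right)/p_b,\ 1\right\},&\theta_b\in\Theta_{i^*},\\ \max\{d_i/p_b,1\},&\theta_b\notin\Theta_{i^*}.\end{cases}$$ *)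

theory Defs
  imports Complex_Main "HOL-Library.Extended_Real"
begin

text \<open>Solutions are indexed by 0..<k, parameter values by 0..<B.
  y i b = y_i(theta_b), lam2 i b = lambda_i^2(theta_b), alpha i b = alpha_i(theta_b),
  ib b = i^b, istar = i^*.\<close>

definition Gfun :: "(nat \<Rightarrow> nat \<Rightarrow> real) \<Rightarrow> (nat \<Rightarrow> nat \<Rightarrow> real) \<Rightarrow> (nat \<Rightarrow> nat \<Rightarrow> real)
    \<Rightarrow> (nat \<Rightarrow> nat) \<Rightarrow> nat \<Rightarrow> nat \<Rightarrow> real" where
  "Gfun y lam2 alpha ib i b =
     (if alpha i b = 0 \<or> alpha (ib b) b = 0 then 0
      else (y i b - y (ib b) b)^2 /
           (2 * (lam2 i b / alpha i b + lam2 (ib b) b / alpha (ib b) b)))"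

definition Mset :: "nat \<Rightarrow> nat \<Rightarrow> (nat \<Rightarrow> nat \<Rightarrow> real) set" where
  "Mset k B = {m. (\<forall>i<k. \<forall>b<B. m i b \<in> {0,1}) \<and> (\<forall>b<B. (\<Sum>i<k. m i b) = 1)}"

definition dM :: "nat \<Rightarrow> (nat \<Rightarrow> real) \<Rightarrow> nat \<Rightarrow> nat \<Rightarrow> (nat \<Rightarrow> nat \<Rightarrow> real) \<Rightarrow> real" where
  "dM B p istar j m = (\<Sum>b<B. p b * m istar b) - (\<Sum>b<B. p b * m j b)"

definition IM :: "nat \<Rightarrow> nat \<Rightarrow> (nat \<Rightarrow> nat) \<Rightarrow> (nat \<Rightarrow> nat \<Rightarrow> real) \<Rightarrow> (nat \<times> nat) set" where
  "IM k B ib m = {(i, b). i < k \<and> b < B \<and> m i b = 1 \<and> i \<noteq> ib b}"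

definition Aset :: "nat \<Rightarrow> nat \<Rightarrow> (nat \<Rightarrow> real) \<Rightarrow> nat \<Rightarrow> nat \<Rightarrow> (nat \<Rightarrow> nat \<Rightarrow> real) set" where
  "Aset k B p istar j = {m \<in> Mset k B. dM B p istar j m \<le> 0}"

definition LDR :: "nat \<Rightarrow> nat \<Rightarrow> (nat \<Rightarrow> real) \<Rightarrow> (nat \<Rightarrow> nat \<Rightarrow> real) \<Rightarrow> (nat \<Rightarrow> nat \<Rightarrow> real)
    \<Rightarrow> (nat \<Rightarrow> nat \<Rightarrow> real) \<Rightarrow> (nat \<Rightarrow> nat) \<Rightarrow> nat \<Rightarrow> nat \<Rightarrow> real" where
  "LDR k B p y lam2 alpha ib istar j =
     Min ((\<lambda>m. \<Sum>(i, b)\<in>IM k B ib m. Gfun y lam2 alpha ib i b) ` Aset k B p istar j)"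

definition dtrue :: "nat \<Rightarrow> (nat \<Rightarrow> real) \<Rightarrow> (nat \<Rightarrow> nat) \<Rightarrow> nat \<Rightarrow> nat \<Rightarrow> real" where
  "dtrue B p ib istar j =
     (\<Sum>b<B. p b * (if istar = ib b then 1 else 0)) - (\<Sum>b<B. p b * (if j = ib b then 1 else 0))"

definition Xi :: "nat \<Rightarrow> nat \<Rightarrow> (nat \<Rightarrow> nat) \<Rightarrow> nat \<Rightarrow> (nat \<times> nat) set" where
  "Xi k B ib istar = {(i, b). i < k \<and> b < B \<and> i \<noteq> istar \<and> i \<noteq> ib b}"

definition Wt :: "nat \<Rightarrow> nat \<Rightarrow> (nat \<Rightarrow> real) \<Rightarrow> (nat \<Rightarrow> nat) \<Rightarrow> nat \<Rightarrow> nat \<Rightarrow> nat \<Rightarrow> ereal" where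
  "Wt k B p ib istar i b =
     (if (i, b) \<notin> Xi k B ib istar then \<infinity>
      else if ib b = istar then
        ereal (max (min (Min {dtrue B p ib istar j | j. j < k \<and> j \<noteq> istar})
                        (dtrue B p ib istar i / 2) / p b) 1)
      else ereal (max (dtrue B p ib istar i / p b) 1))"

definition LDRlow :: "nat \<Rightarrow> nat \<Rightarrow> (nat \<Rightarrow> real) \<Rightarrow> (nat \<Rightarrow> nat \<Rightarrow> real) \<Rightarrow> (nat \<Rightarrow> nat \<Rightarrow> real)
    \<Rightarrow> (nat \<Rightarrow> nat \<Rightarrow> real) \<Rightarrow> (nat \<Rightarrow> nat) \<Rightarrow> nat \<Rightarrow> ereal" where
  "LDRlow k B p y lam2 alpha ib istar =
     Min ((\<lambda>(i, b). Wt k B p ib istar i b * ereal (Gfun y lam2 alpha ib i b)) ` Xi k B ib istar)"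

end

theory Submission
  imports Defs
begin

(* Fix j different from i* and M in A_j, and let S be the pairs of I(M) lying in Xi. Each column
   of M selects exactly one solution, so d_j - d_j(M) splits into per-column contributions, and
   d_j(M) <= 0 < d_j forces the sum over S of p_b / c_i(theta_b) to be at least 1, where
   W_i(theta_b) = max (c_i(theta_b) / p_b) 1 on Xi (c is Wnum below). Hence the reciprocals
   1 / W_i(theta_b) sum to at least 1 over S, and summing G_i(theta_b) >= LDR_low / W_i(theta_b)
   over S yields LDR_low <= sum of G over I(M). *)

lemma sum_subset_times_nested:
  assumes "S \<subseteq> A \<times> C" "finite A" "finite C"
  shows "(\<Sum>(a, c)\<in>S. f a c) = (\<Sum>c\<in>C. \<Sum>a\<in>A. if (a, c) \<in> S then f a c else 0)"
proof -
  have "(\<Sum>(a, c)\<in>S. f a c) = (\<Sum>x\<in>A \<times> C. if x \<in> S then case_prod f x else 0)"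
    using assms by (simp add: sum.inter_restrict[symmetric] Int_absorb1)
  also have "\<dots> = (\<Sum>(a, c)\<in>A \<times> C. if (a, c) \<in> S then f a c else 0)"
    by (intro sum.cong) auto
  also have "\<dots> = (\<Sum>a\<in>A. \<Sum>c\<in>C. if (a, c) \<in> S then f a c else 0)"
    by (simp add: sum.cartesian_product)
  also have "\<dots> = (\<Sum>c\<in>C. \<Sum>a\<in>A. if (a, c) \<in> S then f a c else 0)"
    by (rule sum.swap)
  finally show ?thesis .
qed

lemma one_le_sum_min_one:
  fixes v :: "'a \<Rightarrow> real"
  assumes "finite S" "\<forall>x\<in>S. 0 \<le> v x" "1 \<le> sum v S"
  shows "1 \<le> (\<Sum>x\<in>S. min (v x) 1)"
proof (cases "\<exists>x\<in>S. 1 \<le> v x")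
  case True
  then obtain x where "x \<in> S" "1 \<le> v x" by blast
  then have "min (v x) 1 \<le> (\<Sum>x\<in>S. min (v x) 1)"
    using assms by (intro member_le_sum) auto
  with \<open>1 \<le> v x\<close> show ?thesis by simp
next
  case False
  then have "(\<Sum>x\<in>S. min (v x) 1) = sum v S" by (intro sum.cong) auto
  with assms show ?thesis by simp
qed

lemma le_sum_of_weighted_lower_bounds:
  fixes w g :: "'a \<Rightarrow> real"
  assumes "finite S" "\<forall>x\<in>S. 0 < w x" "\<forall>x\<in>S. 0 \<le> g x" "\<forall>x\<in>S. L \<le> w x * g x"
    and "1 \<le> (\<Sum>x\<in>S. 1 / w x)"
  shows "L \<le> sum g S"
proof (cases "L \<le> 0")
  case True
  then show ?thesis using assms(3) sum_nonneg by (metis order_trans)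
next
  case False
  have "L \<le> L * (\<Sum>x\<in>S. 1 / w x)" using False assms(5) by simp
  also have "\<dots> = (\<Sum>x\<in>S. L / w x)" by (simp add: sum_distrib_left)
  also have "\<dots> \<le> sum g S"
    using assms(2,4) by (intro sum_mono) (simp add: divide_le_eq mult.commute)
  finally show ?thesis .
qed

(* The left factor is the contribution of column b to d_j - d_j(M) when M selects row a in that
   column and t = i^b; c is the numerator of the balance weight W_a(theta_b). *)
lemma column_excess_bound:
  fixes d :: "nat \<Rightarrow> real"
  assumes "j \<noteq> istar" "0 < p" "0 < dm" "dm \<le> d j" "a \<noteq> istar \<Longrightarrow> a \<noteq> t \<Longrightarrow> 0 < d a"
  defines "c \<equiv> if t = istar then min dm (d a / 2) else d a"
  shows "p * ((if j = a then 1 else 0) - (if istar = a then 1 else 0)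
              + (if istar = t then 1 else 0) - (if j = t then 1 else 0))
         \<le> d j * (if a \<noteq> istar \<and> a \<noteq> t then p / c else 0)"
proof (cases "a \<noteq> istar \<and> a \<noteq> t")
  case True
  let ?r = "(if j = a then 1 else 0) + (if istar = t then 1 else 0) - (if j = t then 1 else (0::real))"
  have "0 < c" using True assms by (simp add: c_def)
  have "?r * c \<le> d j"
    using True assms by (auto simp: c_def)
  then have "?r * c * (p / c) \<le> d j * (p / c)"
    using \<open>0 < c\<close> \<open>0 < p\<close> by (intro mult_right_mono) auto
  then show ?thesis
    using True \<open>0 < c\<close> by (simp add: mult.commute)
next
  case False
  then show ?thesis using assms(1,2) by (auto simp: mult_le_0_iff)
qed

lemma Mset_column:
  assumes "m \<in> Mset k B" "b < B"
  shows "\<exists>a<k. \<forall>i<k. m i b = (if i = a then 1 else 0)"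
proof -
  have ent: "\<forall>i<k. m i b \<in> {0, 1}" and col: "(\<Sum>i<k. m i b) = 1"
    using assms unfolding Mset_def by auto
  obtain a where a: "a < k" "m a b = 1"
    using col ent by (metis (no_types, lifting) insert_iff singletonD sum.neutral zero_neq_one lessThan_iff)
  have "m i b = 0" if "i < k" "i \<noteq> a" for i
  proof (rule ccontr)
    assume "m i b \<noteq> 0"
    then have "m i b = 1" using ent that by auto
    then have "(\<Sum>x\<in>{a, i}. m x b) = 2" using a that by simp
    moreover have "(\<Sum>x\<in>{a, i}. m x b) \<le> (\<Sum>x<k. m x b)"
      by (rule sum_mono2) (use a that ent in auto)
    ultimately show False using col by simp
  qed
  with a show ?thesis by auto
qed

lemma finite_IM: "finite (IM k B ib m)"
  by (rule finite_subset[of _ "{..<k} \<times> {..<B}"]) (auto simp: IM_def)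

lemma finite_Xi: "finite (Xi k B ib istar)"
  by (rule finite_subset[of _ "{..<k} \<times> {..<B}"]) (auto simp: Xi_def)

lemma Gfun_nonneg:
  assumes "0 \<le> lam2 i b" "0 \<le> lam2 (ib b) b" "0 \<le> alpha i b" "0 \<le> alpha (ib b) b"
  shows "0 \<le> Gfun y lam2 alpha ib i b"
  using assms by (simp add: Gfun_def)

definition dmin :: "nat \<Rightarrow> nat \<Rightarrow> (nat \<Rightarrow> real) \<Rightarrow> (nat \<Rightarrow> nat) \<Rightarrow> nat \<Rightarrow> real" where
  "dmin k B p ib istar = Min {dtrue B p ib istar j | j. j < k \<and> j \<noteq> istar}"

definition Wnum :: "nat \<Rightarrow> nat \<Rightarrow> (nat \<Rightarrow> real) \<Rightarrow> (nat \<Rightarrow> nat) \<Rightarrow> nat \<Rightarrow> nat \<Rightarrow> nat \<Rightarrow> real" where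
  "Wnum k B p ib istar i b =
     (if ib b = istar then min (dmin k B p ib istar) (dtrue B p ib istar i / 2)
      else dtrue B p ib istar i)"

lemma Wt_eq_on_Xi:
  "(i, b) \<in> Xi k B ib istar \<Longrightarrow> Wt k B p ib istar i b = ereal (max (Wnum k B p ib istar i b / p b) 1)"
  by (simp add: Wt_def Wnum_def dmin_def)

lemma
  assumes d_pos: "\<forall>i<k. i \<noteq> istar \<longrightarrow> 0 < dtrue B p ib istar i" and "j < k" "j \<noteq> istar"
  shows dmin_pos: "0 < dmin k B p ib istar"
    and dmin_le: "dmin k B p ib istar \<le> dtrue B p ib istar j"
proof -
  let ?D = "{dtrue B p ib istar j | j. j < k \<and> j \<noteq> istar}"
  have "finite ?D" "?D \<noteq> {}" using assms(2,3) by auto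
  then show "0 < dmin k B p ib istar" "dmin k B p ib istar \<le> dtrue B p ib istar j"
    using assms unfolding dmin_def by (auto simp: Min_gr_iff intro!: Min_le)
qed

lemma Wnum_pos:
  assumes "\<forall>i<k. i \<noteq> istar \<longrightarrow> 0 < dtrue B p ib istar i" "i < k" "i \<noteq> istar"
  shows "0 < Wnum k B p ib istar i b"
  using assms dmin_pos[OF assms] by (simp add: Wnum_def)

lemma Mset_column_excess_bound:
  assumes m: "m \<in> Mset k B" and "b < B" and j: "j < k" "j \<noteq> istar" and "istar < k" "0 < p b"
    and d_pos: "\<forall>i<k. i \<noteq> istar \<longrightarrow> 0 < dtrue B p ib istar i"
  shows "p b * (m j b - m istar b + (if istar = ib b then 1 else 0) - (if j = ib b then 1 else 0))
    \<le> dtrue B p ib istar j *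
       (\<Sum>i<k. if (i, b) \<in> IM k B ib m \<inter> Xi k B ib istar then p b / Wnum k B p ib istar i b else 0)"
proof -
  let ?c = "Wnum k B p ib istar"
  obtain a where a: "a < k" "\<forall>i<k. m i b = (if i = a then 1 else 0)"
    using Mset_column[OF m \<open>b < B\<close>] by blast
  have "(\<Sum>i<k. if (i, b) \<in> IM k B ib m \<inter> Xi k B ib istar then p b / ?c i b else 0)
      = (\<Sum>i<k. if i = a then (if a \<noteq> istar \<and> a \<noteq> ib b then p b / ?c a b else 0) else 0)"
    using a \<open>b < B\<close> by (intro sum.cong) (auto simp: IM_def Xi_def)
  also have "\<dots> = (if a \<noteq> istar \<and> a \<noteq> ib b then p b / ?c a b else 0)"
    using a by simp
  finally have column: "(\<Sum>i<k. if (i, b) \<in> IM k B ib m \<inter> Xi k B ib istar then p b / ?c i b else 0)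
      = (if a \<noteq> istar \<and> a \<noteq> ib b then p b / ?c a b else 0)" .
  have "m j b - m istar b = (if j = a then 1 else 0) - (if istar = a then 1 else 0)"
    using a j \<open>istar < k\<close> by simp
  moreover have "p b * ((if j = a then 1 else 0) - (if istar = a then 1 else 0)
      + (if istar = ib b then 1 else 0) - (if j = ib b then 1 else 0))
    \<le> dtrue B p ib istar j * (if a \<noteq> istar \<and> a \<noteq> ib b then p b / ?c a b else 0)"
    unfolding Wnum_def
    by (rule column_excess_bound)
      (use dmin_pos[OF d_pos j] dmin_le[OF d_pos j] j a d_pos \<open>0 < p b\<close> in auto)
  ultimately show ?thesis
    unfolding column by simp
qed

lemma one_le_sum_p_div_Wnum:
  assumes m: "m \<in> Aset k B p istar j" and j: "j < k" "j \<noteq> istar" and "istar < k"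
    and p_pos: "\<forall>b<B. 0 < p b"
    and d_pos: "\<forall>i<k. i \<noteq> istar \<longrightarrow> 0 < dtrue B p ib istar i"
  shows "1 \<le> (\<Sum>(i, b)\<in>IM k B ib m \<inter> Xi k B ib istar. p b / Wnum k B p ib istar i b)"
proof -
  let ?S = "IM k B ib m \<inter> Xi k B ib istar"
  let ?d = "dtrue B p ib istar" and ?c = "Wnum k B p ib istar"
  have "?d j \<le> (\<Sum>b<B. p b * (m j b - m istar b
                   + (if istar = ib b then 1 else 0) - (if j = ib b then 1 else 0)))"
    using m unfolding Aset_def dM_def dtrue_def
    by (simp add: algebra_simps sum.distrib sum_subtractf)
  also have "\<dots> \<le> (\<Sum>b<B. ?d j * (\<Sum>i<k. if (i, b) \<in> ?S then p b / ?c i b else 0))"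
    using m j \<open>istar < k\<close> p_pos d_pos unfolding Aset_def
    by (intro sum_mono Mset_column_excess_bound) auto
  also have "\<dots> = ?d j * (\<Sum>(i, b)\<in>?S. p b / ?c i b)"
    by (subst sum_subset_times_nested[of _ "{..<k}" "{..<B}"])
      (auto simp: IM_def sum_distrib_left)
  finally show ?thesis
    using d_pos j by simp
qed

lemma le_sum_IM_of_balanced_bound:
  fixes G :: "nat \<Rightarrow> nat \<Rightarrow> real"
  assumes m: "m \<in> Aset k B p istar j" and j: "j < k" "j \<noteq> istar" and "istar < k"
    and p_pos: "\<forall>b<B. 0 < p b"
    and d_pos: "\<forall>i<k. i \<noteq> istar \<longrightarrow> 0 < dtrue B p ib istar i"
    and G_nonneg: "\<forall>i<k. \<forall>b<B. 0 \<le> G i b"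
    and L_le: "\<forall>(i, b)\<in>Xi k B ib istar. L \<le> max (Wnum k B p ib istar i b / p b) 1 * G i b"
  shows "L \<le> (\<Sum>(i, b)\<in>IM k B ib m. G i b)"
proof -
  let ?S = "IM k B ib m \<inter> Xi k B ib istar" and ?c = "Wnum k B p ib istar"
  define v where "v = (\<lambda>(i, b). p b / ?c i b)"
  define w where "w = (\<lambda>(i, b). max (?c i b / p b) 1)"
  have fin: "finite ?S" using finite_IM by blast
  have pos: "0 < ?c i b" "0 < p b" if "(i, b) \<in> ?S" for i b
    using that Wnum_pos[OF d_pos] p_pos by (auto simp: Xi_def)
  have "1 \<le> sum v ?S"
    using one_le_sum_p_div_Wnum[OF assms(1-6)] by (simp add: v_def)
  moreover have "\<forall>x\<in>?S. 0 \<le> v x"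
    using pos by (auto simp: v_def less_imp_le)
  ultimately have "1 \<le> (\<Sum>x\<in>?S. min (v x) 1)"
    using fin one_le_sum_min_one by blast
  also have "\<dots> = (\<Sum>x\<in>?S. 1 / w x)"
  proof (rule sum.cong[OF refl])
    fix x assume "x \<in> ?S"
    obtain i b where x: "x = (i, b)" by (cases x)
    with \<open>x \<in> ?S\<close> have "0 < ?c i b" "0 < p b" by (simp_all add: pos)
    then show "min (v x) 1 = 1 / w x"
      by (cases "?c i b \<le> p b") (auto simp: x v_def w_def max_def min_def divide_le_eq le_divide_eq)
  qed
  finally have w_sum: "1 \<le> (\<Sum>x\<in>?S. 1 / w x)" .
  have w_pos: "\<forall>x\<in>?S. 0 < w x" by (auto simp: w_def)
  have G_S: "\<forall>x\<in>?S. 0 \<le> case_prod G x" using G_nonneg by (auto simp: IM_def)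
  have L_S: "\<forall>x\<in>?S. L \<le> w x * case_prod G x" using L_le by (auto simp: w_def)
  have "L \<le> (\<Sum>x\<in>?S. case_prod G x)"
    by (rule le_sum_of_weighted_lower_bounds[OF fin w_pos G_S L_S w_sum])
  also have "\<dots> \<le> (\<Sum>(i, b)\<in>IM k B ib m. G i b)"
    using finite_IM G_nonneg by (intro sum_mono2) (auto simp: IM_def)
  finally show ?thesis .
qed

lemma favorable_set_nonempty:
  fixes p :: "nat \<Rightarrow> real"
  assumes "\<forall>b<B. 0 \<le> p b"
    and "(\<Sum>b<B. p b * (if j = ib b then 1 else 0)) < (\<Sum>b<B. p b * (if istar = ib b then 1 else 0))"
  shows "\<exists>b<B. ib b = istar"
proof (rule ccontr)
  assume "\<not> ?thesis"
  then have "\<forall>b\<in>{..<B}. p b * (if istar = ib b then 1 else 0) = 0" by auto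
  then have "(\<Sum>b<B. p b * (if istar = ib b then 1 else 0)) = 0" by (rule sum.neutral)
  moreover have "0 \<le> (\<Sum>b<B. p b * (if j = ib b then 1 else 0))"
    using assms(1) by (intro sum_nonneg) auto
  ultimately show False using assms(2) by simp
qed

lemma LDRlow_eq_Min:
  assumes "Xi k B ib istar \<noteq> {}"
  shows "LDRlow k B p y lam2 alpha ib istar = ereal (Min ((\<lambda>(i, b).
           max (Wnum k B p ib istar i b / p b) 1 * Gfun y lam2 alpha ib i b) ` Xi k B ib istar))"
proof -
  let ?f = "\<lambda>(i, b). max (Wnum k B p ib istar i b / p b) 1 * Gfun y lam2 alpha ib i b"
  have "(\<lambda>(i, b). Wt k B p ib istar i b * ereal (Gfun y lam2 alpha ib i b)) ` Xi k B ib istar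
      = ereal ` ?f ` Xi k B ib istar"
    by (auto simp: Wt_eq_on_Xi image_image simp del: ereal_max intro!: image_cong)
  then show ?thesis
    unfolding LDRlow_def using assms finite_Xi by (simp add: mono_Min_commute[symmetric] mono_def)
qed

lemma LDR_lower_bound:
  assumes "j < k" "\<forall>b<B. 0 \<le> p b"
    and "\<forall>m\<in>Aset k B p istar j. L \<le> (\<Sum>(i, b)\<in>IM k B ib m. Gfun y lam2 alpha ib i b)"
  shows "L \<le> LDR k B p y lam2 alpha ib istar j"
proof -
  let ?f = "\<lambda>m. \<Sum>(i, b)\<in>IM k B ib m. Gfun y lam2 alpha ib i b"
  have "?f ` Aset k B p istar j
      \<subseteq> (\<lambda>T. \<Sum>(i, b)\<in>T. Gfun y lam2 alpha ib i b) ` Pow ({..<k} \<times> {..<B})"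
    by (auto simp: IM_def)
  then have "finite (?f ` Aset k B p istar j)"
    by (rule finite_subset) simp
  moreover have "(\<lambda>i b. if i = j then 1 else 0) \<in> Aset k B p istar j"
    using assms(1,2) by (auto simp: Aset_def Mset_def dM_def intro!: sum_nonneg)
  ultimately show ?thesis
    unfolding LDR_def using assms(3) by (auto intro!: Min.boundedI)
qed

theorem theorem2:
  fixes k B :: nat and p :: "nat \<Rightarrow> real"
    and y lam2 alpha :: "nat \<Rightarrow> nat \<Rightarrow> real"
    and ib :: "nat \<Rightarrow> nat" and istar :: nat
  assumes k2: "k \<ge> 2"
    and p_pos: "\<forall>b<B. p b > 0"
    and p_sum: "(\<Sum>b<B. p b) = 1"
    and lam_pos: "\<forall>i<k. \<forall>b<B. lam2 i b > 0"
    and alpha_nonneg: "\<forall>i<k. \<forall>b<B. alpha i b \<ge> 0"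
    and alpha_sum: "(\<Sum>i<k. \<Sum>b<B. alpha i b) = 1"
    and ib_def: "\<forall>b<B. ib b < k \<and> (\<forall>i<k. i \<noteq> ib b \<longrightarrow> y (ib b) b < y i b)"
    and istar_def: "istar < k \<and> (\<forall>j<k. j \<noteq> istar \<longrightarrow>
          (\<Sum>b<B. p b * (if j = ib b then 1 else 0)) < (\<Sum>b<B. p b * (if istar = ib b then 1 else 0)))"
  shows "ereal (Min {LDR k B p y lam2 alpha ib istar j | j. j < k \<and> j \<noteq> istar})
           \<ge> LDRlow k B p y lam2 alpha ib istar"
proof -
  let ?G = "Gfun y lam2 alpha ib" and ?w = "\<lambda>i b. max (Wnum k B p ib istar i b / p b) 1"
  have ist: "istar < k"
    and freq: "\<forall>j<k. j \<noteq> istar \<longrightarrow> (\<Sum>b<B. p b * (if j = ib b then 1 else 0))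
                                     < (\<Sum>b<B. p b * (if istar = ib b then 1 else 0))"
    using istar_def by simp_all
  have p_nonneg: "\<forall>b<B. 0 \<le> p b" using p_pos by (simp add: less_imp_le)
  have d_pos: "\<forall>i<k. i \<noteq> istar \<longrightarrow> 0 < dtrue B p ib istar i"
    using freq by (simp add: dtrue_def)
  have G_nonneg: "\<forall>i<k. \<forall>b<B. 0 \<le> ?G i b"
  proof (intro allI impI)
    fix i b assume "i < k" "b < B"
    moreover have "ib b < k" using ib_def \<open>b < B\<close> by blast
    ultimately show "0 \<le> ?G i b"
      using lam_pos alpha_nonneg by (intro Gfun_nonneg) (simp_all add: less_imp_le)
  qed
  have "\<exists>j<k. j \<noteq> istar"
    using k2 by (intro exI[of _ "if istar = 0 then 1 else 0"]) auto
  then obtain j0 where j0: "j0 < k" "j0 \<noteq> istar" by blast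
  then obtain b0 where "b0 < B" "ib b0 = istar"
    using favorable_set_nonempty[OF p_nonneg freq[rule_format, OF j0]] by blast
  with j0 have Xi_ne: "Xi k B ib istar \<noteq> {}" by (auto simp: Xi_def)
  define L where "L = Min ((\<lambda>(i, b). ?w i b * ?G i b) ` Xi k B ib istar)"
  have L_le: "\<forall>(i, b)\<in>Xi k B ib istar. L \<le> ?w i b * ?G i b"
    unfolding L_def using finite_Xi by (auto intro!: Min_le)
  have "L \<le> LDR k B p y lam2 alpha ib istar j" if j: "j < k" "j \<noteq> istar" for j
  proof (rule LDR_lower_bound[OF \<open>j < k\<close> p_nonneg], intro ballI)
    fix m assume "m \<in> Aset k B p istar j"
    then show "L \<le> (\<Sum>(i, b)\<in>IM k B ib m. ?G i b)"
      by (rule le_sum_IM_of_balanced_bound[OF _ j ist p_pos d_pos G_nonneg L_le])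
  qed
  then have "L \<le> Min {LDR k B p y lam2 alpha ib istar j | j. j < k \<and> j \<noteq> istar}"
    using j0 by (intro Min.boundedI) auto
  then show ?thesis
    using LDRlow_eq_Min[OF Xi_ne] by (simp add: L_def)
qed

end
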